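(* Let $P$ denote the set of prime numbers, and let $Q \subseteq P$ be a random subset in which each prime $p$ is included independently with probability $1/2$. Define the completely multiplicative function $\lambda_Q : \mathbb{N} \to \{-1,1\}$ by $\lambda_Q(p) = -1$ if $p \in Q$, $\lambda_Q(p) = 1$ if $p \notin Q$, extended by $\lambda_Q(p_1^{e_1}\cdots p_k^{e_k}) = \lambda_Q(p_1)^{e_1}\cdots\lambda_Q(p_k)^{e_k}$. Fix an integer $k \ge 0$ and positive integers $i_1 < i_2 < \dots < i_k$, and set \[ T_N = \frac{1}{N}\sum_{n=1}^N \lambda_Q(n)\lambda_Q(n+i_1)\cdots\lambda_Q(n+i_k). \] Then there is a constant $C$ (depending only on $i_1,\dots,i_k$) such that $E(T_N^2) \le C N^{-0.05}$ for all $N \ge 1$, where $E$ denotes expectation over the random choice of $Q$.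
   Context: $\mathbb{N} = \{1,2,3,\dots\}$. *)

theory Defs
  imports "HOL-Probability.Probability" "HOL-Computational_Algebra.Primes"
begin

text \<open>Probability space of independent fair coins indexed by the naturals;
  the random set of primes is Q(w) = {p. prime p and w p}, so each prime is
  included independently with probability 1/2.\<close>
definition coin_space :: "(nat \<Rightarrow> bool) measure" where
  "coin_space = PiM UNIV (\<lambda>_::nat. measure_pmf (bernoulli_pmf (1/2)))"

definition randQ :: "(nat \<Rightarrow> bool) \<Rightarrow> nat set" where
  "randQ w = {p. prime p \<and> w p}"

definition lambdaQ :: "nat set \<Rightarrow> nat \<Rightarrow> real" where
  "lambdaQ Q n = (\<Prod>p\<in>prime_factors n. (if p \<in> Q then -1 else 1) ^ multiplicity p n)"

definition T_avg :: "nat set \<Rightarrow> nat list \<Rightarrow> nat \<Rightarrow> real" where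
  "T_avg Q is N = (1 / real N) * (\<Sum>n=1..N. lambdaQ Q n * (\<Prod>i\<leftarrow>is. lambdaQ Q (n + i)))"

end

theory Submission
  imports Defs "HOL-Computational_Algebra.Squarefree" "HOL-Computational_Algebra.Nth_Powers"
begin

text \<open>Write \<open>F(n) = n (n + i\<^sub>1) \<cdots> (n + i\<^sub>k)\<close> and \<open>K = i\<^sub>1 + \<dots> + i\<^sub>k\<close>. By complete
  multiplicativity, \<open>N\<^sup>2 E(T\<^sub>N\<^sup>2)\<close> is the sum of \<open>E \<lambda>\<^sub>Q(F(n) F(m))\<close> over \<open>n, m \<le> N\<close>, and flipping
  the coin of one prime shows that \<open>E \<lambda>\<^sub>Q(M)\<close> is 1 if \<open>M\<close> is a square and 0 otherwise. So it
  suffices to count pairs with \<open>F(n) F(m)\<close> a square. For fixed \<open>n\<close>, a prime \<open>p > K\<close> occurring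
  in \<open>m\<close> to an odd power occurs in \<open>F(m)\<close> to the same power, hence divides \<open>F(n)\<close>. Thus the
  squarefree part of \<open>m\<close> is built from at most \<open>K + 1 + \<omega>(F(n))\<close> primes, leaving at most
  \<open>2\<^bsup>K + 1 + \<omega>(F(n))\<^esup> \<surd>N\<close> values of \<open>m\<close>. As \<open>2\<^bsup>\<omega>(x)\<^esup> \<le> C\<^sub>L x\<^bsup>1/L\<^esup>\<close> and \<open>F(n) \<le> (N + K)\<^bsup>k+1\<^esup>\<close>,
  this is \<open>O(N\<^bsup>3/4\<^esup>)\<close>, whence \<open>E(T\<^sub>N\<^sup>2) = O(N\<^bsup>-1/4\<^esup>)\<close>.\<close>

text \<open>Fewer than \<open>2\<^sup>L\<close> prime factors lie below \<open>2\<^sup>L\<close>; each of the others contributes a factor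
  of at least 2 to \<open>x\<^bsup>1/L\<^esup>\<close>.\<close>
lemma two_power_card_prime_factors_le:
  fixes x L :: nat
  assumes "x > 0" and "L > 0"
  shows "(2::real) ^ card (prime_factors x) \<le> 2 ^ 2 ^ L * real x powr (1 / L)"
proof -
  define Small where "Small = {p\<in>prime_factors x. p < 2 ^ L}"
  define Large where "Large = {p\<in>prime_factors x. 2 ^ L \<le> p}"
  have "card (prime_factors x) = card Small + card Large"
    unfolding Small_def Large_def
    by (subst card_Un_disjoint[symmetric]) (auto intro!: arg_cong[where f = card])
  moreover have "card Small \<le> 2 ^ L"
    using card_mono[of "{..<2 ^ L}" Small] unfolding Small_def by auto
  moreover have "(2::real) ^ card Large \<le> real x powr (1 / L)"
  proof -
    have "(2::real) ^ card Large = (\<Prod>p\<in>Large. 2)" by simp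
    also have "\<dots> \<le> (\<Prod>p\<in>Large. real p powr (1 / L))"
    proof (rule prod_mono)
      fix p assume "p \<in> Large"
      then have "real (2 ^ L) powr (1 / L) \<le> real p powr (1 / L)"
        unfolding Large_def by (intro powr_mono2) auto
      then show "0 \<le> (2::real) \<and> 2 \<le> real p powr (1 / L)"
        using \<open>L > 0\<close> by (simp add: powr_realpow[symmetric] powr_powr)
    qed
    also have "\<dots> = real (\<Prod>Large) powr (1 / L)"
      by (simp add: prod_powr_distrib)
    also have "\<dots> \<le> real x powr (1 / L)"
    proof -
      have "\<Prod>Large dvd (\<Prod>p\<in>prime_factors x. p ^ multiplicity p x)"
        unfolding Large_def
      proof (rule prod_dvd_prod_subset2)
        fix p assume "p \<in> {p \<in> prime_factors x. 2 ^ L \<le> p}"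
        then have "multiplicity p x > 0"
          by (auto simp: prime_factors_multiplicity)
        then show "p dvd p ^ multiplicity p x"
          by simp
      qed auto
      then have "\<Prod>Large dvd x"
        using \<open>x > 0\<close> by (simp add: prod_prime_factors)
      then show ?thesis
        using \<open>x > 0\<close> by (intro powr_mono2) (auto dest: dvd_imp_le simp del: of_nat_prod)
    qed
    finally show ?thesis .
  qed
  ultimately show ?thesis
    by (auto simp: power_add intro!: mult_mono power_increasing)
qed

lemma prod_prime_factors_squarefree_nat:
  fixes n :: nat
  assumes "squarefree n"
  shows "\<Prod>(prime_factors n) = n"
proof -
  have "n \<noteq> 0" using assms by (cases "n = 0") auto
  then have "\<Prod>(prime_factors n) = (\<Prod>p\<in>prime_factors n. p ^ multiplicity p n)"
    using assms by (intro prod.cong) (auto simp: squarefree_factorial_semiring')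
  also have "\<dots> = n"
    using \<open>n \<noteq> 0\<close> by (simp add: prod_prime_factors)
  finally show ?thesis .
qed

lemma prime_factors_squarefree_part_nat:
  "prime_factors (squarefree_part (n::nat)) = {p. prime p \<and> odd (multiplicity p n)}"
  by (auto simp: prime_factors_multiplicity prime_multiplicity_squarefree_part odd_iff_mod_2_eq_one)

text \<open>Each such \<open>n\<close> is \<open>\<Prod>A * x\<^sup>2\<close> with \<open>A \<subseteq> S\<close> and \<open>1 \<le> x \<le> \<surd>N\<close>.\<close>
lemma card_squarefree_part_supported_le:
  fixes S :: "nat set"
  assumes "finite S"
  shows "real (card {n\<in>{1..N}. prime_factors (squarefree_part n) \<subseteq> S}) \<le> 2 ^ card S * sqrt N"
proof -
  define r where "r = nat \<lfloor>sqrt N\<rfloor>"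
  have "{n\<in>{1..N}. prime_factors (squarefree_part n) \<subseteq> S}
          \<subseteq> (\<lambda>(A, x). \<Prod>A * x ^ 2) ` (Pow S \<times> {1..r})" (is "?Ns \<subseteq> ?f ` ?D")
  proof safe
    fix n assume n: "n \<in> {1..N}" and supp: "prime_factors (squarefree_part n) \<subseteq> S"
    have "n = \<Prod>(prime_factors (squarefree_part n)) * square_part n ^ 2"
      by (simp add: prod_prime_factors_squarefree_nat flip: squarefree_decompose)
    moreover have "square_part n \<in> {1..r}"
    proof -
      have "square_part n ^ 2 \<le> n"
        using n by (intro dvd_imp_le) auto
      then have "real (square_part n) \<le> sqrt N"
        using n by (simp add: real_le_rsqrt flip: of_nat_power)
      then show ?thesis
        using n by (auto simp: r_def le_nat_floor Suc_le_eq intro!: Nat.gr0I)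
    qed
    ultimately show "n \<in> ?f ` ?D"
      using supp by (intro image_eqI[where x = "(prime_factors (squarefree_part n), square_part n)"]) auto
  qed
  then have "card ?Ns \<le> card (?f ` ?D)"
    using assms by (intro card_mono) auto
  also have "\<dots> \<le> card ?D"
    by (rule card_image_le) (use assms in auto)
  also have "\<dots> = 2 ^ card S * r"
    using assms by (simp add: card_cartesian_product card_Pow)
  finally have "real (card ?Ns) \<le> real (2 ^ card S * r)"
    by (simp only: of_nat_le_iff)
  also have "\<dots> \<le> 2 ^ card S * sqrt N"
    by (simp add: r_def)
  finally show ?thesis .
qed

lemma lambdaQ_conv_prod_mset:
  "lambdaQ Q n = (\<Prod>p\<in>#prime_factorization n. if p \<in> Q then -1 else 1)"
  unfolding lambdaQ_def image_prod_mset_multiplicity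
  by (intro prod.cong) (auto simp: count_prime_factorization)

lemma lambdaQ_0 [simp]: "lambdaQ Q 0 = 1"
  and lambdaQ_Suc_0 [simp]: "lambdaQ Q (Suc 0) = 1"
  by (simp_all add: lambdaQ_def)

lemma lambdaQ_mult: "a \<noteq> 0 \<Longrightarrow> b \<noteq> 0 \<Longrightarrow> lambdaQ Q (a * b) = lambdaQ Q a * lambdaQ Q b"
  by (simp add: lambdaQ_conv_prod_mset prime_factorization_mult)

lemma lambdaQ_prod_list:
  "0 \<notin> set xs \<Longrightarrow> lambdaQ Q (prod_list xs) = (\<Prod>x\<leftarrow>xs. lambdaQ Q x)"
  by (induction xs) (simp_all add: lambdaQ_mult prod_list_zero_iff)

lemma abs_lambdaQ [simp]: "\<bar>lambdaQ Q n\<bar> = 1"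
  unfolding lambdaQ_def abs_prod by (intro prod.neutral) (simp add: power_abs)

lemma lambdaQ_square:
  assumes "is_square n"
  shows "lambdaQ Q n = 1"
proof -
  obtain y where n: "n = y ^ 2"
    using assms by (auto elim: is_nth_powerE)
  show ?thesis
  proof (cases "y = 0")
    case True
    then show ?thesis by (simp add: n)
  next
    case False
    then have "lambdaQ Q n = lambdaQ Q y ^ 2"
      by (simp add: n power2_eq_square lambdaQ_mult)
    also have "\<dots> = \<bar>lambdaQ Q y\<bar> ^ 2"
      by (simp only: power2_abs)
    finally show ?thesis by simp
  qed
qed

lemma lambdaQ_randQ_flip:
  assumes "prime p" and "M \<noteq> 0" and "odd (multiplicity p M)"
  shows "lambdaQ (randQ (w(p := \<not> w p))) M = - lambdaQ (randQ w) M"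
proof -
  define s where "s w' q = (if q \<in> randQ w' then -1 else (1::real)) ^ multiplicity q M" for w' q
  let ?w' = "w(p := \<not> w p)"
  have p: "p \<in> prime_factors M"
    using assms by (auto simp: prime_factors_multiplicity intro!: Nat.gr0I)
  have "lambdaQ (randQ ?w') M = s ?w' p * (\<Prod>q\<in>prime_factors M - {p}. s ?w' q)"
    unfolding lambdaQ_def s_def using p by (subst prod.remove) auto
  also have "(\<Prod>q\<in>prime_factors M - {p}. s ?w' q) = (\<Prod>q\<in>prime_factors M - {p}. s w q)"
    by (intro prod.cong) (auto simp: s_def randQ_def)
  also have "s ?w' p = - s w p"
    using assms by (auto simp: s_def randQ_def)
  also have "- s w p * (\<Prod>q\<in>prime_factors M - {p}. s w q) = - lambdaQ (randQ w) M"
    unfolding lambdaQ_def s_def using p by (subst (2) prod.remove) auto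
  finally show ?thesis .
qed

lemma measurable_PiM_fun_upd:
  assumes f: "f \<in> M p \<rightarrow>\<^sub>M M p"
  shows "(\<lambda>x. x(p := f (x p))) \<in> PiM UNIV M \<rightarrow>\<^sub>M PiM UNIV M"
  unfolding fun_upd_def
proof (rule measurable_PiM_single')
  fix i
  show "(\<lambda>x. if i = p then f (x p) else x i) \<in> PiM UNIV M \<rightarrow>\<^sub>M M i"
    using measurable_compose[OF measurable_component_singleton[of p UNIV M] f] by (cases "i = p") simp_all
qed (auto simp: space_PiM PiE_iff intro!: measurable_space[OF f])

lemma distr_PiM_fun_upd:
  assumes M: "\<And>i. prob_space (M i)"
    and f: "f \<in> M p \<rightarrow>\<^sub>M M p" and f_preserving: "distr (M p) (M p) f = M p"
  shows "distr (PiM UNIV M) (PiM UNIV M) (\<lambda>x. x(p := f (x p))) = PiM UNIV M"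
    (is "distr ?P ?P ?g = ?P")
proof (rule measure_eqI_PiM_infinite[symmetric, OF refl])
  interpret prob_space ?P
    using M by (rule prob_space_PiM)
  show "finite_measure ?P"
    by unfold_locales
  show "sets (distr ?P ?P ?g) = sets ?P"
    by simp
next
  fix J A assume J: "finite J" and A: "\<And>i. i \<in> J \<Longrightarrow> A i \<in> sets (M i)"
  define A' where "A' i = (if i = p then f -` A i \<inter> space (M p) else A i)" for i
  have A': "A' i \<in> sets (M i)" if "i \<in> J" for i
    using A[OF that] measurable_sets[OF f] by (auto simp: A'_def)
  have "?P (prod_emb UNIV M J (Pi\<^sub>E J A)) = (\<Prod>i\<in>J. M i (A i))"
    using J A by (intro emeasure_PiM_emb M) auto
  also have "\<dots> = (\<Prod>i\<in>J. M i (A' i))"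
  proof (intro prod.cong refl)
    fix i assume "i \<in> J"
    show "M i (A i) = M i (A' i)"
    proof (cases "i = p")
      case True
      then have "M i (A' i) = distr (M p) (M p) f (A p)"
        using A[OF \<open>i \<in> J\<close>] f by (simp add: A'_def emeasure_distr)
      then show ?thesis
        using True f_preserving by simp
    qed (simp add: A'_def)
  qed
  also have "\<dots> = ?P (prod_emb UNIV M J (Pi\<^sub>E J A'))"
    using J A' by (intro emeasure_PiM_emb[symmetric] M) auto
  also have "prod_emb UNIV M J (Pi\<^sub>E J A') = ?g -` prod_emb UNIV M J (Pi\<^sub>E J A) \<inter> space ?P"
  proof -
    have "?g x \<in> prod_emb UNIV M J (Pi\<^sub>E J A) \<longleftrightarrow> x \<in> prod_emb UNIV M J (Pi\<^sub>E J A')"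
      if x: "x \<in> space ?P" for x
    proof -
      have "x p \<in> space (M p)" and fx: "f (x p) \<in> space (M p)"
        using x measurable_space[OF f] by (auto simp: space_PiM)
      then have "?g x i \<in> A i \<longleftrightarrow> x i \<in> A' i" for i
        by (auto simp: A'_def)
      moreover have "?g x i \<in> space (M i) \<longleftrightarrow> x i \<in> space (M i)" for i
        using x fx by (auto simp: space_PiM)
      ultimately show ?thesis
        by (simp add: prod_emb_iff restrict_PiE_iff Pi_iff del: fun_upd_apply)
    qed
    then show ?thesis
      using prod_emb_subset_PiM[of UNIV M J "Pi\<^sub>E J A'"] by blast
  qed
  also have "?P \<dots> = distr ?P ?P ?g (prod_emb UNIV M J (Pi\<^sub>E J A))"
    using J A by (intro emeasure_distr[symmetric] measurable_PiM_fun_upd f sets_PiM_I) auto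
  finally show "?P (prod_emb UNIV M J (Pi\<^sub>E J A)) = distr ?P ?P ?g (prod_emb UNIV M J (Pi\<^sub>E J A))" .
qed

lemma distr_bernoulli_half_Not:
  "distr (measure_pmf (bernoulli_pmf (1/2))) (measure_pmf (bernoulli_pmf (1/2))) Not
     = measure_pmf (bernoulli_pmf (1/2))"
proof -
  have "distr (measure_pmf (bernoulli_pmf (1/2))) (measure_pmf (bernoulli_pmf (1/2))) Not
          = measure_pmf (map_pmf Not (bernoulli_pmf (1/2)))"
    unfolding map_pmf_rep_eq by (rule distr_cong) simp_all
  also have "map_pmf Not (bernoulli_pmf (1/2)) = bernoulli_pmf (1/2)"
    unfolding bernoulli_pmf_half_conv_pmf_of_set
    using surjI[of Not Not] by (subst map_pmf_of_set_inj) (auto intro: inj_onI)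
  finally show ?thesis .
qed

lemma prob_space_coin_space: "prob_space coin_space"
  unfolding coin_space_def by (intro prob_space_PiM) (auto simp: measure_pmf.prob_space_axioms)

lemma measurable_coin_flip: "(\<lambda>w. w(p := \<not> w p)) \<in> coin_space \<rightarrow>\<^sub>M coin_space"
  unfolding coin_space_def by (intro measurable_PiM_fun_upd) simp

lemma distr_coin_space_flip: "distr coin_space coin_space (\<lambda>w. w(p := \<not> w p)) = coin_space"
  unfolding coin_space_def
  by (intro distr_PiM_fun_upd distr_bernoulli_half_Not) (auto simp: measure_pmf.prob_space_axioms)

lemma measurable_coin_space_component [measurable]:
  "(\<lambda>w. w i) \<in> coin_space \<rightarrow>\<^sub>M count_space UNIV"
proof -
  have "(\<lambda>w. w i) \<in> coin_space \<rightarrow>\<^sub>M measure_pmf (bernoulli_pmf (1/2))"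
    unfolding coin_space_def by (rule measurable_component_singleton) simp
  then show ?thesis
    by (subst measurable_cong_sets[OF refl, where N' = "measure_pmf (bernoulli_pmf (1/2))"]) simp_all
qed

lemma lambdaQ_randQ_measurable [measurable]:
  "(\<lambda>w. lambdaQ (randQ w) n) \<in> borel_measurable coin_space"
proof -
  have "(\<lambda>w. lambdaQ (randQ w) n)
          = (\<lambda>w. \<Prod>q\<in>prime_factors n. (if prime q \<and> w q then -1 else 1) ^ multiplicity q n)"
    unfolding lambdaQ_def randQ_def by auto
  then show ?thesis by simp
qed

lemma integrable_lambdaQ_randQ [simp]: "integrable coin_space (\<lambda>w. lambdaQ (randQ w) n)"
proof -
  interpret prob_space coin_space
    by (rule prob_space_coin_space)
  show ?thesis
    by (rule integrable_const_bound[where B = 1]) auto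
qed

lemma integral_lambdaQ_randQ:
  assumes "M \<noteq> 0"
  shows "(\<integral>w. lambdaQ (randQ w) M \<partial>coin_space) = (if is_square M then 1 else 0)"
proof (cases "is_square M")
  case True
  interpret prob_space coin_space
    by (rule prob_space_coin_space)
  show ?thesis
    using True by (simp add: lambdaQ_square prob_space)
next
  case False
  then obtain p where p: "prime p" "odd (multiplicity p M)"
    by (auto simp: is_nth_power_conv_multiplicity_nat)
  let ?f = "\<lambda>w. lambdaQ (randQ w) M"
  have "integral\<^sup>L coin_space ?f = integral\<^sup>L (distr coin_space coin_space (\<lambda>w. w(p := \<not> w p))) ?f"
    by (simp add: distr_coin_space_flip)
  also have "\<dots> = (\<integral>w. ?f (w(p := \<not> w p)) \<partial>coin_space)"
    by (intro integral_distr measurable_coin_flip) simp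
  also have "\<dots> = - integral\<^sup>L coin_space ?f"
    using lambdaQ_randQ_flip[OF p(1) assms p(2)] by simp
  finally show ?thesis
    using False by simp
qed

definition shifted_product :: "nat list \<Rightarrow> nat \<Rightarrow> nat" where
  "shifted_product hs n = (\<Prod>h\<leftarrow>0 # hs. n + h)"

lemma shifted_product_eq_0_iff [simp]: "shifted_product hs n = 0 \<longleftrightarrow> n = 0"
  by (auto simp: shifted_product_def prod_list_zero_iff)

lemma shifted_product_le:
  assumes "\<forall>h\<in>set hs. h \<le> K"
  shows "shifted_product hs n \<le> (n + K) ^ (length hs + 1)"
proof -
  have "(\<Prod>h\<leftarrow>hs. n + h) \<le> (n + K) ^ length hs"
    using assms by (induction hs) (auto intro!: mult_le_mono)
  then show ?thesis
    by (simp add: shifted_product_def mult_le_mono)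
qed

lemma T_avg_eq_sum_shifted_product:
  "T_avg Q hs N = (\<Sum>n=1..N. lambdaQ Q (shifted_product hs n)) / N"
proof -
  have "lambdaQ Q (shifted_product hs n) = lambdaQ Q n * (\<Prod>h\<leftarrow>hs. lambdaQ Q (n + h))"
    if "n \<in> {1..N}" for n
    unfolding shifted_product_def using that by (subst lambdaQ_prod_list) (auto simp: o_def)
  then have "(\<Sum>n=1..N. lambdaQ Q n * (\<Prod>h\<leftarrow>hs. lambdaQ Q (n + h)))
               = (\<Sum>n=1..N. lambdaQ Q (shifted_product hs n))"
    by (intro sum.cong) simp_all
  then show ?thesis
    unfolding T_avg_def by simp
qed

text \<open>A prime \<open>p\<close> exceeding all shifts that divides \<open>n\<close> divides none of the \<open>n + h\<close>.\<close>
lemma multiplicity_shifted_product: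
  assumes p: "prime p" "p dvd n" and "n > 0" and hs: "\<forall>h\<in>set hs. 0 < h \<and> h < p"
  shows "multiplicity p (shifted_product hs n) = multiplicity p n"
proof -
  have not_dvd: "\<not> p dvd (\<Prod>h\<leftarrow>hs. n + h)"
  proof
    assume "p dvd (\<Prod>h\<leftarrow>hs. n + h)"
    then obtain h where h: "h \<in> set hs" "p dvd n + h"
      using prime_dvd_prod_mset_iff[OF \<open>prime p\<close>, of "mset (map (\<lambda>h. n + h) hs)"]
      by (auto simp flip: prod_mset_prod_list)
    then have "p dvd h"
      using p by (simp add: dvd_add_right_iff)
    then show False
      using hs h dvd_imp_le[OF \<open>p dvd h\<close>] by fastforce
  qed
  then have "(\<Prod>h\<leftarrow>hs. n + h) \<noteq> 0"
    by (metis dvd_0_right)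
  then have "multiplicity p (shifted_product hs n) = multiplicity p n + multiplicity p (\<Prod>h\<leftarrow>hs. n + h)"
    unfolding shifted_product_def using p \<open>n > 0\<close>
    by (auto intro!: prime_elem_multiplicity_mult_distrib)
  then show ?thesis
    using not_dvd by (simp add: not_dvd_imp_multiplicity_0)
qed

lemma prime_factors_squarefree_part_subset_if_square:
  assumes "n > 0" and "m > 0" and hs: "\<forall>h\<in>set hs. 0 < h \<and> h \<le> K"
    and square: "is_square (shifted_product hs n * shifted_product hs m)"
  shows "prime_factors (squarefree_part m) \<subseteq> {..K} \<union> prime_factors (shifted_product hs n)"
proof
  let ?F = "shifted_product hs"
  fix p assume "p \<in> prime_factors (squarefree_part m)"
  then have p: "prime p" "odd (multiplicity p m)"
    by (auto simp: prime_factors_squarefree_part_nat)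
  show "p \<in> {..K} \<union> prime_factors (?F n)"
  proof (cases "p \<le> K")
    case False
    have "p dvd m"
      using p by (cases "p dvd m") (auto simp: not_dvd_imp_multiplicity_0)
    then have "multiplicity p (?F m) = multiplicity p m"
      using \<open>m > 0\<close> p hs False by (intro multiplicity_shifted_product) auto
    moreover have "even (multiplicity p (?F n * ?F m))"
      using square p by (auto simp: is_nth_power_conv_multiplicity_nat)
    moreover have "multiplicity p (?F n * ?F m) = multiplicity p (?F n) + multiplicity p (?F m)"
      using p \<open>n > 0\<close> \<open>m > 0\<close> by (intro prime_elem_multiplicity_mult_distrib) auto
    ultimately have "multiplicity p (?F n) > 0"
      using p by (auto intro!: Nat.gr0I)
    then show ?thesis
      using p by (simp add: prime_factors_multiplicity)
  qed simp
qed

lemma card_square_shifted_products_le: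
  assumes "n > 0" and hs: "\<forall>h\<in>set hs. 0 < h \<and> h \<le> K"
  shows "real (card {m\<in>{1..N}. is_square (shifted_product hs n * shifted_product hs m)})
           \<le> 2 ^ (K + 1) * 2 ^ card (prime_factors (shifted_product hs n)) * sqrt N"
proof -
  let ?F = "shifted_product hs"
  define S where "S = {..K} \<union> prime_factors (?F n)"
  have "{m\<in>{1..N}. is_square (?F n * ?F m)} \<subseteq> {m\<in>{1..N}. prime_factors (squarefree_part m) \<subseteq> S}"
  proof
    fix m assume "m \<in> {m\<in>{1..N}. is_square (?F n * ?F m)}"
    then show "m \<in> {m\<in>{1..N}. prime_factors (squarefree_part m) \<subseteq> S}"
      using prime_factors_squarefree_part_subset_if_square[OF \<open>n > 0\<close> _ hs, of m]
      by (auto simp: S_def Suc_le_eq)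
  qed
  then have "card {m\<in>{1..N}. is_square (?F n * ?F m)} \<le> card {m\<in>{1..N}. prime_factors (squarefree_part m) \<subseteq> S}"
    by (intro card_mono) auto
  then have "real (card {m\<in>{1..N}. is_square (?F n * ?F m)}) \<le> 2 ^ card S * sqrt N"
    using card_squarefree_part_supported_le[of S N] by (simp add: S_def)
  also have "(2::real) ^ card S \<le> 2 ^ (K + 1 + card (prime_factors (?F n)))"
    using card_Un_le[of "{..K}" "prime_factors (?F n)"] by (intro power_increasing) (auto simp: S_def)
  finally show ?thesis
    by (simp add: power_add mult_right_mono)
qed

lemma two_power_card_prime_factors_shifted_product_le:
  assumes hs: "\<forall>h\<in>set hs. h \<le> K" and "1 \<le> n" "n \<le> N"
  shows "(2::real) ^ card (prime_factors (shifted_product hs n))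
           \<le> 2 ^ 2 ^ (4 * (length hs + 1)) * (real K + 1) * real N powr (1 / 4)"
proof -
  define L where "L = 4 * (length hs + 1)"
  have "real (shifted_product hs n) powr (1 / real L) \<le> real ((N + K) ^ (length hs + 1)) powr (1 / real L)"
  proof -
    have "shifted_product hs n \<le> (N + K) ^ (length hs + 1)"
      using \<open>n \<le> N\<close> by (intro order.trans[OF shifted_product_le[OF hs] power_mono]) auto
    then have "real (shifted_product hs n) \<le> real ((N + K) ^ (length hs + 1))"
      by (simp only: of_nat_le_iff)
    then show ?thesis
      by (intro powr_mono2) auto
  qed
  also have "\<dots> = (real (N + K) powr real (length hs + 1)) powr (1 / real L)"
    using \<open>1 \<le> n\<close> \<open>n \<le> N\<close> by (subst powr_realpow) auto
  also have "\<dots> = real (N + K) powr (1 / 4)"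
    unfolding powr_powr by (intro arg_cong[where f = "(powr) (real (N + K))"]) (simp add: L_def field_simps)
  also have "\<dots> \<le> real ((K + 1) * N) powr (1 / 4)"
    using \<open>1 \<le> n\<close> \<open>n \<le> N\<close> by (intro powr_mono2) (auto simp: algebra_simps mult_le_cancel_left1)
  also have "\<dots> = real (K + 1) powr (1 / 4) * N powr (1 / 4)"
    unfolding of_nat_mult by (rule powr_mult)
  also have "\<dots> \<le> real (K + 1) powr 1 * N powr (1 / 4)"
    by (intro mult_right_mono powr_mono) auto
  finally have root_bound: "real (shifted_product hs n) powr (1 / real L) \<le> (real K + 1) * N powr (1 / 4)"
    by (simp add: add.commute)
  have "(2::real) ^ card (prime_factors (shifted_product hs n))
          \<le> 2 ^ 2 ^ L * real (shifted_product hs n) powr (1 / real L)"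
    using \<open>1 \<le> n\<close> by (intro two_power_card_prime_factors_le) (auto simp: L_def intro!: Nat.gr0I)
  also have "\<dots> \<le> 2 ^ 2 ^ L * ((real K + 1) * N powr (1 / 4))"
    using root_bound by (intro mult_left_mono) simp_all
  finally show ?thesis
    by (simp add: L_def mult.assoc)
qed

lemma integral_T_avg_square:
  "(\<integral>w. (T_avg (randQ w) hs N)\<^sup>2 \<partial>coin_space)
     = card (SIGMA n:{1..N}. {m\<in>{1..N}. is_square (shifted_product hs n * shifted_product hs m)})
         / (real N)\<^sup>2"
proof -
  let ?F = "shifted_product hs"
  have "(T_avg (randQ w) hs N)\<^sup>2
          = (\<Sum>n=1..N. \<Sum>m=1..N. lambdaQ (randQ w) (?F n * ?F m)) / (real N)\<^sup>2" for w
  proof -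
    have "(\<Sum>n=1..N. lambdaQ (randQ w) (?F n))\<^sup>2
            = (\<Sum>n=1..N. \<Sum>m=1..N. lambdaQ (randQ w) (?F n * ?F m))"
      unfolding power2_eq_square sum_product by (auto intro!: sum.cong simp: lambdaQ_mult)
    then show ?thesis
      by (simp add: T_avg_eq_sum_shifted_product power_divide)
  qed
  then have "(\<integral>w. (T_avg (randQ w) hs N)\<^sup>2 \<partial>coin_space)
               = (\<Sum>n=1..N. \<Sum>m=1..N. \<integral>w. lambdaQ (randQ w) (?F n * ?F m) \<partial>coin_space) / (real N)\<^sup>2"
    by (simp add: Bochner_Integration.integral_sum)
  also have "\<dots> = (\<Sum>n=1..N. real (card {m\<in>{1..N}. is_square (?F n * ?F m)})) / (real N)\<^sup>2"
  proof -
    have row: "(\<Sum>m=1..N. \<integral>w. lambdaQ (randQ w) (?F n * ?F m) \<partial>coin_space)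
                 = real (card {m\<in>{1..N}. is_square (?F n * ?F m)})" if "n \<in> {1..N}" for n
    proof -
      have "(\<Sum>m=1..N. \<integral>w. lambdaQ (randQ w) (?F n * ?F m) \<partial>coin_space)
              = (\<Sum>m=1..N. if is_square (?F n * ?F m) then 1 else 0)"
        using that by (intro sum.cong) (simp_all add: integral_lambdaQ_randQ)
      then show ?thesis
        by (simp add: sum.inter_filter[symmetric])
    qed
    show ?thesis
      by (intro arg_cong[where f = "\<lambda>x. x / (real N)\<^sup>2"] sum.cong refl row)
  qed
  also have "\<dots> = card (SIGMA n:{1..N}. {m\<in>{1..N}. is_square (?F n * ?F m)}) / (real N)\<^sup>2"
    by (simp add: card_SigmaI)
  finally show ?thesis .
qed

lemma card_square_shifted_product_pairs_le:
  assumes hs: "\<forall>h\<in>set hs. 0 < h \<and> h \<le> K"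
  shows "real (card (SIGMA n:{1..N}. {m\<in>{1..N}. is_square (shifted_product hs n * shifted_product hs m)}))
           \<le> 2 ^ (K + 1) * 2 ^ 2 ^ (4 * (length hs + 1)) * (real K + 1) * real N powr (7 / 4)"
proof -
  let ?F = "shifted_product hs"
  define c where "c = 2 ^ (K + 1) * 2 ^ 2 ^ (4 * (length hs + 1)) * (real K + 1)"
  have row: "real (card {m\<in>{1..N}. is_square (?F n * ?F m)}) \<le> c * real N powr (3 / 4)"
    if n: "n \<in> {1..N}" for n
  proof -
    have "real (card {m\<in>{1..N}. is_square (?F n * ?F m)})
            \<le> 2 ^ (K + 1) * 2 ^ card (prime_factors (?F n)) * sqrt N"
      using n hs by (intro card_square_shifted_products_le) auto
    also have "\<dots> \<le> 2 ^ (K + 1) * (2 ^ 2 ^ (4 * (length hs + 1)) * (real K + 1) * real N powr (1 / 4)) * sqrt N"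
      using n hs by (intro mult_right_mono mult_left_mono two_power_card_prime_factors_shifted_product_le) auto
    also have "\<dots> = c * (real N powr (1 / 4) * real N powr (1 / 2))"
      by (simp add: c_def powr_half_sqrt)
    also have "\<dots> = c * real N powr (3 / 4)"
      by (simp flip: powr_add)
    finally show ?thesis .
  qed
  have "real (card (SIGMA n:{1..N}. {m\<in>{1..N}. is_square (?F n * ?F m)}))
          = (\<Sum>n=1..N. real (card {m\<in>{1..N}. is_square (?F n * ?F m)}))"
    by (simp add: card_SigmaI)
  also have "\<dots> \<le> (\<Sum>n=1..N. c * real N powr (3 / 4))"
    by (intro sum_mono row)
  also have "\<dots> = c * real N powr (7 / 4)"
    using powr_add[of "real N" 1 "3 / 4"] by simp
  finally show ?thesis
    by (simp add: c_def)
qed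

theorem mainTheorem2:
  fixes "is" :: "nat list"
  assumes "sorted_wrt (<) is" and "\<forall>i\<in>set is. 0 < i"
  shows "\<exists>C::real. \<forall>N::nat. N \<ge> 1 \<longrightarrow>
           (\<integral>w. (T_avg (randQ w) is N)\<^sup>2 \<partial>coin_space) \<le> C * real N powr (-0.05)"
proof -
  define K where "K = sum_list is"
  have shifts: "\<forall>i\<in>set is. 0 < i \<and> i \<le> K"
    using assms(2) by (auto simp: K_def member_le_sum_list)
  define C where "C = 2 ^ (K + 1) * 2 ^ 2 ^ (4 * (length is + 1)) * (real K + 1)"
  show ?thesis
  proof (intro exI allI impI)
    fix N :: nat
    assume "N \<ge> 1"
    have "(\<integral>w. (T_avg (randQ w) is N)\<^sup>2 \<partial>coin_space)
            = card (SIGMA n:{1..N}. {m\<in>{1..N}. is_square (shifted_product is n * shifted_product is m)})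
                / (real N)\<^sup>2"
      by (rule integral_T_avg_square)
    also have "\<dots> \<le> C * real N powr (7 / 4) / (real N)\<^sup>2"
      using card_square_shifted_product_pairs_le[OF shifts] by (intro divide_right_mono) (simp_all add: C_def)
    also have "\<dots> = C * real N powr (- 1 / 4)"
      using \<open>N \<ge> 1\<close> powr_diff[of "real N" "7 / 4" 2] by (simp add: powr_numeral)
    also have "\<dots> \<le> C * real N powr (- 0.05)"
      using \<open>N \<ge> 1\<close> by (intro mult_left_mono powr_mono) (auto simp: C_def)
    finally show "(\<integral>w. (T_avg (randQ w) is N)\<^sup>2 \<partial>coin_space) \<le> C * real N powr (- 0.05)" .
  qed
qed

end
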